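(* Let $(\mathbb{E},\dot I,\dot\otimes,L,p)$ and $(\mathbb{F},\ddot I,\ddot\otimes,L',p')$ be weakly closed monoidal refinements of the same symmetric monoidal closed category $\mathbb{B}$, let $\mathcal{T}$ be a $\otimes$-strong monad on $\mathbb{B}$, let $(M,\le,1,\cdot)$ be a preordered monoid, and let $F:\mathbb{E}\to\mathbb{F}$ be a morphism of weakly closed monoidal refinements. Then post-composition $\Delta\mapsto F\circ\Delta$ restricts to a monotone function from $\mathbf{Asign}_{\dot\otimes}(\mathcal{T},M)$ (the $M$-graded $\dot\otimes$-parameterized assignments of $\mathbb{E}$ on $\mathcal{T}$) to $\mathbf{Asign}_{\ddot\otimes}(\mathcal{T},M)$ (the $M$-graded $\ddot\otimes$-parameterized assignments of $\mathbb{F}$ on $\mathcal{T}$).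
   Context: Let $(\mathbb{B},I,\otimes,\multimap)$ be a symmetric monoidal closed category with evaluation $ev$. A weakly closed monoidal refinement $(\mathbb{E},\dot I,\dot\otimes,L,p)$ of $\mathbb{B}$ is a symmetric monoidal category $(\mathbb{E},\dot I,\dot\otimes)$ with an adjunction $L\dashv p$, $p:\mathbb{E}\to\mathbb{B}$, such that: (a) $p$ is strict symmetric monoidal and faithful; (b) the unit of the adjunction is the identity; (c) for each $X\in\mathbb{B}$, $-\dot\otimes LX$ has a right adjoint $X\dot\pitchfork-$; (d) for each $X$, $(p,p)$ is a map of adjunctions from $(-\dot\otimes LX\dashv X\dot\pitchfork-)$ to $(-\otimes X\dashv X\multimap-)$. (A map of adjunctions $(F,G)$ from $\langle L,R,\eta\rangle:\mathbb{C}\rightharpoonup\mathbb{D}$ to $\langle L',R',\eta'\rangle:\mathbb{C}'\rightharpoonup\mathbb{D}'$ is a pair $F:\mathbb{C}\to\mathbb{C}'$, $G:\mathbb{D}\to\mathbb{D}'$ with $G\circ L=L'\circ F$, $F\circ R=R'\circ G$, $F\eta=\eta' F$.) Similarly for $(\mathbb{F},\ddot I,\ddot\otimes,L',p')$ with right adjoints $X\ddot\pitchfork-$. A morphism of weakly closed monoidal refinements is a functor $F:\mathbb{E}\to\mathbb{F}$ such that (1) $F$ is strict symmetric monoidal, (2) $(\mathrm{Id}_{\mathbb{B}},F)$ is a map of adjunctions $(L\dashv p)\to(L'\dashv p')$, and (3) for each $X\in\mathbb{B}$, $(F,F)$ is a map of adjunctions $(-\dot\otimes LX\dashv X\dot\pitchfork-)\to(-\ddot\otimes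 L'X\dashv X\ddot\pitchfork-)$. For $X,Y\in\mathbb{E}$ and $f\in\mathbb{B}(pX,pY)$, $f:X\dot\to Y$ means $f=p\dot f$ for some $\dot f\in\mathbb{E}(X,Y)$ (similarly for $\mathbb{F}$ with $p'$). $\mathcal{T}=(T,\eta,(-)^\dagger)$ is a monad on $\mathbb{B}$ with strength $\sigma$; for $f:X\otimes Y\to TZ$, $f^\ddagger=f^\dagger\circ\sigma$; $\mathrm{kl}_{X,Y}=(ev_{X,TY})^\ddagger:(X\multimap TY)\otimes TX\to TY$. For $F:A\to|\mathbb{B}|$, $\mathbf{Ord}(p,F)$ is the class of $G:A\to|\mathbb{E}|$ with $pG(a)=F(a)$, preordered by $G\le G'$ iff $\mathrm{id}_{F(a)}:G(a)\dot\to G'(a)$ for all $a$. An $M$-graded $\dot\otimes$-parameterized assignment of $\mathbb{E}$ on $\mathcal{T}$ is a monotone $\Delta:(M,\le)\to\mathbf{Ord}(p,T)$ with $\mathrm{kl}_{X,Y}:(X\dot\pitchfork\Delta\alpha Y)\dot\otimes\Delta\beta X\dot\to\Delta(\beta\cdot\alpha)Y$ for all $\alpha,\beta\in M$ and $X,Y\in\mathbb{B}$; likewise for $\mathbb{F}$. Both classes carry the pointwise preorder. *)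

theory Defs
  imports Main
begin

section \<open>Categories (objects of type 'o, arrows of type 'm, composition Comp g f = g o f)\<close>

record ('o,'m) category =
  Obj :: "'o set"
  Arr :: "'m set"
  Dom :: "'m \<Rightarrow> 'o"
  Cod :: "'m \<Rightarrow> 'o"
  idm :: "'o \<Rightarrow> 'm"
  Comp :: "'m \<Rightarrow> 'm \<Rightarrow> 'm"

definition hom :: "('o,'m,'x) category_scheme \<Rightarrow> 'o \<Rightarrow> 'o \<Rightarrow> 'm set" where
  "hom C a b = {f \<in> Arr C. Dom C f = a \<and> Cod C f = b}"

definition is_category :: "('o,'m,'x) category_scheme \<Rightarrow> bool" where
  "is_category C \<longleftrightarrow>
    (\<forall>f\<in>Arr C. Dom C f \<in> Obj C \<and> Cod C f \<in> Obj C) \<and>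
    (\<forall>a\<in>Obj C. idm C a \<in> hom C a a) \<and>
    (\<forall>f\<in>Arr C. \<forall>g\<in>Arr C. Cod C f = Dom C g \<longrightarrow> Comp C g f \<in> hom C (Dom C f) (Cod C g)) \<and>
    (\<forall>f\<in>Arr C. Comp C (idm C (Cod C f)) f = f \<and> Comp C f (idm C (Dom C f)) = f) \<and>
    (\<forall>f\<in>Arr C. \<forall>g\<in>Arr C. \<forall>h\<in>Arr C. Cod C f = Dom C g \<longrightarrow> Cod C g = Dom C h \<longrightarrow>
        Comp C h (Comp C g f) = Comp C (Comp C h g) f)"

definition is_functor :: "('o,'m,'x) category_scheme \<Rightarrow> ('p,'n,'y) category_scheme \<Rightarrow>
    ('o \<Rightarrow> 'p) \<Rightarrow> ('m \<Rightarrow> 'n) \<Rightarrow> bool" where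
  "is_functor C D Fo Fa \<longleftrightarrow> is_category C \<and> is_category D \<and>
    (\<forall>a\<in>Obj C. Fo a \<in> Obj D) \<and>
    (\<forall>f\<in>Arr C. Fa f \<in> hom D (Fo (Dom C f)) (Fo (Cod C f))) \<and>
    (\<forall>a\<in>Obj C. Fa (idm C a) = idm D (Fo a)) \<and>
    (\<forall>f\<in>Arr C. \<forall>g\<in>Arr C. Cod C f = Dom C g \<longrightarrow> Fa (Comp C g f) = Comp D (Fa g) (Fa f))"

definition faithful :: "('o,'m,'x) category_scheme \<Rightarrow> ('m \<Rightarrow> 'n) \<Rightarrow> bool" where
  "faithful C Fa \<longleftrightarrow> (\<forall>a\<in>Obj C. \<forall>b\<in>Obj C. inj_on Fa (hom C a b))"

definition is_iso :: "('o,'m,'x) category_scheme \<Rightarrow> 'm \<Rightarrow> bool" where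
  "is_iso C f \<longleftrightarrow> f \<in> Arr C \<and> (\<exists>g\<in>hom C (Cod C f) (Dom C f).
     Comp C g f = idm C (Dom C f) \<and> Comp C f g = idm C (Cod C f))"

record ('o,'m) smc = "('o,'m) category" +
  tens :: "'o \<Rightarrow> 'o \<Rightarrow> 'o"
  tensa :: "'m \<Rightarrow> 'm \<Rightarrow> 'm"
  munit :: 'o
  assoc :: "'o \<Rightarrow> 'o \<Rightarrow> 'o \<Rightarrow> 'm"   \<comment> \<open>(A x B) x C -> A x (B x C)\<close>
  lunit :: "'o \<Rightarrow> 'm"
  runit :: "'o \<Rightarrow> 'm"
  braid :: "'o \<Rightarrow> 'o \<Rightarrow> 'm"

definition is_smc :: "('o,'m,'x) smc_scheme \<Rightarrow> bool" where
  "is_smc C \<longleftrightarrow> is_category C \<and> munit C \<in> Obj C \<and>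
    (\<forall>a\<in>Obj C. \<forall>b\<in>Obj C. tens C a b \<in> Obj C) \<and>
    (\<forall>f\<in>Arr C. \<forall>g\<in>Arr C. tensa C f g \<in> hom C (tens C (Dom C f) (Dom C g)) (tens C (Cod C f) (Cod C g))) \<and>
    (\<forall>a\<in>Obj C. \<forall>b\<in>Obj C. tensa C (idm C a) (idm C b) = idm C (tens C a b)) \<and>
    (\<forall>f\<in>Arr C. \<forall>g\<in>Arr C. \<forall>f'\<in>Arr C. \<forall>g'\<in>Arr C. Cod C f = Dom C f' \<longrightarrow> Cod C g = Dom C g' \<longrightarrow>
        tensa C (Comp C f' f) (Comp C g' g) = Comp C (tensa C f' g') (tensa C f g)) \<and>
    (\<forall>a\<in>Obj C. \<forall>b\<in>Obj C. \<forall>c\<in>Obj C.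
        assoc C a b c \<in> hom C (tens C (tens C a b) c) (tens C a (tens C b c)) \<and> is_iso C (assoc C a b c)) \<and>
    (\<forall>a\<in>Obj C. lunit C a \<in> hom C (tens C (munit C) a) a \<and> is_iso C (lunit C a)) \<and>
    (\<forall>a\<in>Obj C. runit C a \<in> hom C (tens C a (munit C)) a \<and> is_iso C (runit C a)) \<and>
    (\<forall>a\<in>Obj C. \<forall>b\<in>Obj C. braid C a b \<in> hom C (tens C a b) (tens C b a)) \<and>
    (\<forall>f\<in>Arr C. \<forall>g\<in>Arr C. \<forall>h\<in>Arr C.
        Comp C (assoc C (Cod C f) (Cod C g) (Cod C h)) (tensa C (tensa C f g) h) =
        Comp C (tensa C f (tensa C g h)) (assoc C (Dom C f) (Dom C g) (Dom C h))) \<and>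
    (\<forall>f\<in>Arr C. Comp C (lunit C (Cod C f)) (tensa C (idm C (munit C)) f) = Comp C f (lunit C (Dom C f))) \<and>
    (\<forall>f\<in>Arr C. Comp C (runit C (Cod C f)) (tensa C f (idm C (munit C))) = Comp C f (runit C (Dom C f))) \<and>
    (\<forall>f\<in>Arr C. \<forall>g\<in>Arr C.
        Comp C (braid C (Cod C f) (Cod C g)) (tensa C f g) = Comp C (tensa C g f) (braid C (Dom C f) (Dom C g))) \<and>
    (\<forall>a\<in>Obj C. \<forall>b\<in>Obj C. \<forall>c\<in>Obj C. \<forall>d\<in>Obj C.
        Comp C (assoc C a b (tens C c d)) (assoc C (tens C a b) c d) =
        Comp C (tensa C (idm C a) (assoc C b c d))
          (Comp C (assoc C a (tens C b c) d) (tensa C (assoc C a b c) (idm C d)))) \<and>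
    (\<forall>a\<in>Obj C. \<forall>b\<in>Obj C.
        Comp C (tensa C (idm C a) (lunit C b)) (assoc C a (munit C) b) = tensa C (runit C a) (idm C b)) \<and>
    (\<forall>a\<in>Obj C. \<forall>b\<in>Obj C. \<forall>c\<in>Obj C.
        Comp C (assoc C b c a) (Comp C (braid C a (tens C b c)) (assoc C a b c)) =
        Comp C (tensa C (idm C b) (braid C a c)) (Comp C (assoc C b a c) (tensa C (braid C a b) (idm C c)))) \<and>
    (\<forall>a\<in>Obj C. \<forall>b\<in>Obj C. Comp C (braid C b a) (braid C a b) = idm C (tens C a b))"

record ('o,'m) smcc = "('o,'m) smc" +
  ihom :: "'o \<Rightarrow> 'o \<Rightarrow> 'o"     \<comment> \<open>ihom X Y = X -o Y\<close>
  ev :: "'o \<Rightarrow> 'o \<Rightarrow> 'm"       \<comment> \<open>ev X Y : (X -o Y) x X -> Y\<close>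

definition is_smcc :: "('o,'m,'x) smcc_scheme \<Rightarrow> bool" where
  "is_smcc C \<longleftrightarrow> is_smc C \<and>
    (\<forall>a\<in>Obj C. \<forall>b\<in>Obj C. ihom C a b \<in> Obj C \<and> ev C a b \<in> hom C (tens C (ihom C a b) a) b) \<and>
    (\<forall>a\<in>Obj C. \<forall>b\<in>Obj C. \<forall>z\<in>Obj C. \<forall>f\<in>hom C (tens C z a) b.
        \<exists>!g. g \<in> hom C z (ihom C a b) \<and> Comp C (ev C a b) (tensa C g (idm C a)) = f)"

text \<open>Currying, the functor X -o - on arrows, and the unit of the adjunction (- x X) -| (X -o -).\<close>

definition cur :: "('o,'m,'x) smcc_scheme \<Rightarrow> 'o \<Rightarrow> 'o \<Rightarrow> 'o \<Rightarrow> 'm \<Rightarrow> 'm" where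
  "cur C z a b f = (THE g. g \<in> hom C z (ihom C a b) \<and> Comp C (ev C a b) (tensa C g (idm C a)) = f)"

definition ihoma :: "('o,'m,'x) smcc_scheme \<Rightarrow> 'o \<Rightarrow> 'm \<Rightarrow> 'm" where
  "ihoma C a h = cur C (ihom C a (Dom C h)) a (Cod C h) (Comp C h (ev C a (Dom C h)))"

definition ihom_unit :: "('o,'m,'x) smcc_scheme \<Rightarrow> 'o \<Rightarrow> 'o \<Rightarrow> 'm" where
  "ihom_unit C a z = cur C z a (tens C z a) (idm C (tens C z a))"

definition is_adjunction :: "('o,'m,'x) category_scheme \<Rightarrow> ('p,'n,'y) category_scheme \<Rightarrow>
    ('o \<Rightarrow> 'p) \<Rightarrow> ('m \<Rightarrow> 'n) \<Rightarrow> ('p \<Rightarrow> 'o) \<Rightarrow> ('n \<Rightarrow> 'm) \<Rightarrow> ('o \<Rightarrow> 'm) \<Rightarrow> bool" where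
  "is_adjunction C D Lo La Ro Ra eta \<longleftrightarrow> is_functor C D Lo La \<and> is_functor D C Ro Ra \<and>
    (\<forall>c\<in>Obj C. eta c \<in> hom C c (Ro (Lo c))) \<and>
    (\<forall>f\<in>Arr C. Comp C (Ra (La f)) (eta (Dom C f)) = Comp C (eta (Cod C f)) f) \<and>
    (\<forall>c\<in>Obj C. \<forall>d\<in>Obj D. \<forall>f\<in>hom C c (Ro d).
        \<exists>!g. g \<in> hom D (Lo c) d \<and> Comp C (Ra g) (eta c) = f)"

definition is_map_adj :: "('o,'m,'x) category_scheme \<Rightarrow> ('p,'n,'y) category_scheme \<Rightarrow>
    ('q,'k,'z) category_scheme \<Rightarrow> ('r,'l,'w) category_scheme \<Rightarrow>
    ('o \<Rightarrow> 'p) \<Rightarrow> ('m \<Rightarrow> 'n) \<Rightarrow> ('p \<Rightarrow> 'o) \<Rightarrow> ('n \<Rightarrow> 'm) \<Rightarrow> ('o \<Rightarrow> 'm) \<Rightarrow>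
    ('q \<Rightarrow> 'r) \<Rightarrow> ('k \<Rightarrow> 'l) \<Rightarrow> ('r \<Rightarrow> 'q) \<Rightarrow> ('l \<Rightarrow> 'k) \<Rightarrow> ('q \<Rightarrow> 'k) \<Rightarrow>
    ('o \<Rightarrow> 'q) \<Rightarrow> ('m \<Rightarrow> 'k) \<Rightarrow> ('p \<Rightarrow> 'r) \<Rightarrow> ('n \<Rightarrow> 'l) \<Rightarrow> bool" where
  "is_map_adj C D C' D' Lo La Ro Ra eta Lo' La' Ro' Ra' eta' Fo Fa Go Ga \<longleftrightarrow>
    is_functor C C' Fo Fa \<and> is_functor D D' Go Ga \<and>
    (\<forall>c\<in>Obj C. Go (Lo c) = Lo' (Fo c)) \<and> (\<forall>f\<in>Arr C. Ga (La f) = La' (Fa f)) \<and>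
    (\<forall>d\<in>Obj D. Fo (Ro d) = Ro' (Go d)) \<and> (\<forall>g\<in>Arr D. Fa (Ra g) = Ra' (Ga g)) \<and>
    (\<forall>c\<in>Obj C. Fa (eta c) = eta' (Fo c))"

definition strict_smf :: "('o,'m,'x) smc_scheme \<Rightarrow> ('p,'n,'y) smc_scheme \<Rightarrow>
    ('o \<Rightarrow> 'p) \<Rightarrow> ('m \<Rightarrow> 'n) \<Rightarrow> bool" where
  "strict_smf C D Fo Fa \<longleftrightarrow> is_functor C D Fo Fa \<and>
    (\<forall>a\<in>Obj C. \<forall>b\<in>Obj C. Fo (tens C a b) = tens D (Fo a) (Fo b)) \<and>
    (\<forall>f\<in>Arr C. \<forall>g\<in>Arr C. Fa (tensa C f g) = tensa D (Fa f) (Fa g)) \<and>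
    Fo (munit C) = munit D \<and>
    (\<forall>a\<in>Obj C. \<forall>b\<in>Obj C. \<forall>c\<in>Obj C. Fa (assoc C a b c) = assoc D (Fo a) (Fo b) (Fo c)) \<and>
    (\<forall>a\<in>Obj C. Fa (lunit C a) = lunit D (Fo a)) \<and>
    (\<forall>a\<in>Obj C. Fa (runit C a) = runit D (Fo a)) \<and>
    (\<forall>a\<in>Obj C. \<forall>b\<in>Obj C. Fa (braid C a b) = braid D (Fo a) (Fo b))"

record ('b,'a,'e,'f) wcmr =
  Ecat :: "('e,'f) smc"
  Lo :: "'b \<Rightarrow> 'e"
  La :: "'a \<Rightarrow> 'f"
  po :: "'e \<Rightarrow> 'b"
  pa :: "'f \<Rightarrow> 'a"
  pfo :: "'b \<Rightarrow> 'e \<Rightarrow> 'e"   \<comment> \<open>X pitchfork - on objects\<close>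
  pfa :: "'b \<Rightarrow> 'f \<Rightarrow> 'f"   \<comment> \<open>X pitchfork - on arrows\<close>
  pfu :: "'b \<Rightarrow> 'e \<Rightarrow> 'f"   \<comment> \<open>unit of (- x LX) -| (X pitchfork -)\<close>

definition is_wcmr :: "('b,'a,'x) smcc_scheme \<Rightarrow> ('b,'a,'e,'f) wcmr \<Rightarrow> bool" where
  "is_wcmr B R \<longleftrightarrow> is_smcc B \<and> is_smc (Ecat R) \<and>
    is_adjunction B (Ecat R) (Lo R) (La R) (po R) (pa R) (\<lambda>X. idm B X) \<and>
    strict_smf (Ecat R) B (po R) (pa R) \<and> faithful (Ecat R) (pa R) \<and>
    (\<forall>X\<in>Obj B. is_adjunction (Ecat R) (Ecat R)
        (\<lambda>A. tens (Ecat R) A (Lo R X)) (\<lambda>f. tensa (Ecat R) f (idm (Ecat R) (Lo R X)))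
        (pfo R X) (pfa R X) (pfu R X)) \<and>
    (\<forall>X\<in>Obj B. is_map_adj (Ecat R) (Ecat R) B B
        (\<lambda>A. tens (Ecat R) A (Lo R X)) (\<lambda>f. tensa (Ecat R) f (idm (Ecat R) (Lo R X)))
        (pfo R X) (pfa R X) (pfu R X)
        (\<lambda>A. tens B A X) (\<lambda>f. tensa B f (idm B X)) (ihom B X) (ihoma B X) (ihom_unit B X)
        (po R) (pa R) (po R) (pa R))"

definition is_wcmr_morph :: "('b,'a,'x) smcc_scheme \<Rightarrow> ('b,'a,'e,'f) wcmr \<Rightarrow> ('b,'a,'c,'d) wcmr \<Rightarrow>
    ('e \<Rightarrow> 'c) \<Rightarrow> ('f \<Rightarrow> 'd) \<Rightarrow> bool" where
  "is_wcmr_morph B R S Fo Fa \<longleftrightarrow> strict_smf (Ecat R) (Ecat S) Fo Fa \<and>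
    is_map_adj B (Ecat R) B (Ecat S)
      (Lo R) (La R) (po R) (pa R) (\<lambda>X. idm B X)
      (Lo S) (La S) (po S) (pa S) (\<lambda>X. idm B X)
      id id Fo Fa \<and>
    (\<forall>X\<in>Obj B. is_map_adj (Ecat R) (Ecat R) (Ecat S) (Ecat S)
      (\<lambda>A. tens (Ecat R) A (Lo R X)) (\<lambda>f. tensa (Ecat R) f (idm (Ecat R) (Lo R X)))
      (pfo R X) (pfa R X) (pfu R X)
      (\<lambda>A. tens (Ecat S) A (Lo S X)) (\<lambda>f. tensa (Ecat S) f (idm (Ecat S) (Lo S X)))
      (pfo S X) (pfa S X) (pfu S X)
      Fo Fa Fo Fa)"

section \<open>Strong monads (Kleisli triples with strength)\<close>

record ('b,'a) smonad =
  To :: "'b \<Rightarrow> 'b"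
  eta :: "'b \<Rightarrow> 'a"
  kext :: "'a \<Rightarrow> 'a"
  str :: "'b \<Rightarrow> 'b \<Rightarrow> 'a"     \<comment> \<open>sigma X Y : X x TY -> T(X x Y)\<close>

definition Tmap :: "('b,'a,'x) category_scheme \<Rightarrow> ('b,'a) smonad \<Rightarrow> 'a \<Rightarrow> 'a" where
  "Tmap B T f = kext T (Comp B (eta T (Cod B f)) f)"

definition is_strong_monad :: "('b,'a,'x) smc_scheme \<Rightarrow> ('b,'a) smonad \<Rightarrow> bool" where
  "is_strong_monad B T \<longleftrightarrow>
    (\<forall>X\<in>Obj B. To T X \<in> Obj B \<and> eta T X \<in> hom B X (To T X)) \<and>
    (\<forall>X\<in>Obj B. \<forall>Y\<in>Obj B. \<forall>f\<in>hom B X (To T Y). kext T f \<in> hom B (To T X) (To T Y)) \<and>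
    (\<forall>X\<in>Obj B. kext T (eta T X) = idm B (To T X)) \<and>
    (\<forall>X\<in>Obj B. \<forall>Y\<in>Obj B. \<forall>f\<in>hom B X (To T Y). Comp B (kext T f) (eta T X) = f) \<and>
    (\<forall>X\<in>Obj B. \<forall>Y\<in>Obj B. \<forall>Z\<in>Obj B. \<forall>f\<in>hom B X (To T Y). \<forall>g\<in>hom B Y (To T Z).
        Comp B (kext T g) (kext T f) = kext T (Comp B (kext T g) f)) \<and>
    (\<forall>X\<in>Obj B. \<forall>Y\<in>Obj B. str T X Y \<in> hom B (tens B X (To T Y)) (To T (tens B X Y))) \<and>
    (\<forall>f\<in>Arr B. \<forall>g\<in>Arr B.
        Comp B (str T (Cod B f) (Cod B g)) (tensa B f (Tmap B T g)) =
        Comp B (Tmap B T (tensa B f g)) (str T (Dom B f) (Dom B g))) \<and>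
    (\<forall>Y\<in>Obj B. Comp B (Tmap B T (lunit B Y)) (str T (munit B) Y) = lunit B (To T Y)) \<and>
    (\<forall>X\<in>Obj B. \<forall>Y\<in>Obj B. \<forall>Z\<in>Obj B.
        Comp B (Tmap B T (assoc B X Y Z)) (str T (tens B X Y) Z) =
        Comp B (str T X (tens B Y Z)) (Comp B (tensa B (idm B X) (str T Y Z)) (assoc B X Y (To T Z)))) \<and>
    (\<forall>X\<in>Obj B. \<forall>Y\<in>Obj B. Comp B (str T X Y) (tensa B (idm B X) (eta T Y)) = eta T (tens B X Y)) \<and>
    (\<forall>X\<in>Obj B. \<forall>Y\<in>Obj B. \<forall>Z\<in>Obj B. \<forall>f\<in>hom B Y (To T Z).
        Comp B (str T X Z) (tensa B (idm B X) (kext T f)) =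
        Comp B (kext T (Comp B (str T X Z) (tensa B (idm B X) f))) (str T X Y))"

text \<open>kl X Y = (ev X (TY)) double-dagger = (ev X (TY)) dagger o sigma : (X -o TY) x TX -> TY\<close>
definition kl :: "('b,'a,'x) smcc_scheme \<Rightarrow> ('b,'a) smonad \<Rightarrow> 'b \<Rightarrow> 'b \<Rightarrow> 'a" where
  "kl B T X Y = Comp B (kext T (ev B X (To T Y))) (str T (ihom B X (To T Y)) X)"

definition preordered_monoid :: "('g \<Rightarrow> 'g \<Rightarrow> bool) \<Rightarrow> 'g \<Rightarrow> ('g \<Rightarrow> 'g \<Rightarrow> 'g) \<Rightarrow> bool" where
  "preordered_monoid le one mult \<longleftrightarrow>
    (\<forall>a. le a a) \<and> (\<forall>a b c. le a b \<longrightarrow> le b c \<longrightarrow> le a c) \<and>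
    (\<forall>a b c. mult (mult a b) c = mult a (mult b c)) \<and>
    (\<forall>a. mult one a = a \<and> mult a one = a) \<and>
    (\<forall>a a' b b'. le a a' \<longrightarrow> le b b' \<longrightarrow> le (mult a b) (mult a' b'))"

definition dotarr :: "('b,'a,'e,'f) wcmr \<Rightarrow> 'a \<Rightarrow> 'e \<Rightarrow> 'e \<Rightarrow> bool" where
  "dotarr R f X Y \<longleftrightarrow> (\<exists>fd\<in>hom (Ecat R) X Y. pa R fd = f)"

definition in_Ord :: "('b,'a,'x) category_scheme \<Rightarrow> ('b,'a,'e,'f) wcmr \<Rightarrow> ('b \<Rightarrow> 'b) \<Rightarrow> ('b \<Rightarrow> 'e) \<Rightarrow> bool" where
  "in_Ord B R F G \<longleftrightarrow> (\<forall>a\<in>Obj B. G a \<in> Obj (Ecat R) \<and> po R (G a) = F a)"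

definition ord_le :: "('b,'a,'x) category_scheme \<Rightarrow> ('b,'a,'e,'f) wcmr \<Rightarrow> ('b \<Rightarrow> 'b) \<Rightarrow>
    ('b \<Rightarrow> 'e) \<Rightarrow> ('b \<Rightarrow> 'e) \<Rightarrow> bool" where
  "ord_le B R F G G' \<longleftrightarrow> (\<forall>a\<in>Obj B. dotarr R (idm B (F a)) (G a) (G' a))"

definition is_asign :: "('b,'a,'x) smcc_scheme \<Rightarrow> ('b,'a,'e,'f) wcmr \<Rightarrow> ('b,'a) smonad \<Rightarrow>
    ('g \<Rightarrow> 'g \<Rightarrow> bool) \<Rightarrow> ('g \<Rightarrow> 'g \<Rightarrow> 'g) \<Rightarrow> ('g \<Rightarrow> 'b \<Rightarrow> 'e) \<Rightarrow> bool" where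
  "is_asign B R T le mult \<Delta> \<longleftrightarrow>
    (\<forall>\<alpha>. in_Ord B R (To T) (\<Delta> \<alpha>)) \<and>
    (\<forall>\<alpha> \<beta>. le \<alpha> \<beta> \<longrightarrow> ord_le B R (To T) (\<Delta> \<alpha>) (\<Delta> \<beta>)) \<and>
    (\<forall>\<alpha> \<beta>. \<forall>X\<in>Obj B. \<forall>Y\<in>Obj B.
        dotarr R (kl B T X Y) (tens (Ecat R) (pfo R X (\<Delta> \<alpha> Y)) (\<Delta> \<beta> X)) (\<Delta> (mult \<beta> \<alpha>) Y))"

definition asign_le :: "('b,'a,'x) category_scheme \<Rightarrow> ('b,'a,'e,'f) wcmr \<Rightarrow> ('b,'a) smonad \<Rightarrow>
    ('g \<Rightarrow> 'b \<Rightarrow> 'e) \<Rightarrow> ('g \<Rightarrow> 'b \<Rightarrow> 'e) \<Rightarrow> bool" where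
  "asign_le B R T \<Delta> \<Delta>' \<longleftrightarrow> (\<forall>\<alpha>. ord_le B R (To T) (\<Delta> \<alpha>) (\<Delta>' \<alpha>))"

end

theory Submission
  imports Defs
begin

text \<open>
  A morphism \<open>F\<close> of refinements satisfies \<open>p' \<circ> F = p\<close>, so it sends an arrow of \<open>\<bbbE>\<close>
  lying over \<open>f\<close> to an arrow of \<open>\<bbbF>\<close> lying over the same \<open>f\<close>.  Being strict monoidal and
  commuting with \<open>X \<pitchfork> -\<close>, it sends the domain \<open>(X \<pitchfork> \<Delta>\<alpha> Y) \<otimes> \<Delta>\<beta> X\<close> of the Kleisli
  condition to the corresponding domain for \<open>F \<circ> \<Delta>\<close>; the order conditions are the
  same transport applied to identities.
\<close>

lemma wcmr_morph_functor:
  assumes "is_wcmr_morph B R S Fo Fa"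
  shows "is_functor (Ecat R) (Ecat S) Fo Fa"
  using assms unfolding is_wcmr_morph_def strict_smf_def by blast

lemma wcmr_morph_po:
  assumes "is_wcmr_morph B R S Fo Fa" and "A \<in> Obj (Ecat R)"
  shows "po S (Fo A) = po R A"
  using assms unfolding is_wcmr_morph_def is_map_adj_def by simp

lemma wcmr_morph_pa:
  assumes "is_wcmr_morph B R S Fo Fa" and "f \<in> Arr (Ecat R)"
  shows "pa S (Fa f) = pa R f"
  using assms unfolding is_wcmr_morph_def is_map_adj_def by simp

lemma wcmr_morph_tens:
  assumes "is_wcmr_morph B R S Fo Fa" and "A \<in> Obj (Ecat R)" and "A' \<in> Obj (Ecat R)"
  shows "Fo (tens (Ecat R) A A') = tens (Ecat S) (Fo A) (Fo A')"
  using assms unfolding is_wcmr_morph_def strict_smf_def by blast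

lemma wcmr_morph_pfo:
  assumes "is_wcmr_morph B R S Fo Fa" and "X \<in> Obj B" and "A \<in> Obj (Ecat R)"
  shows "Fo (pfo R X A) = pfo S X (Fo A)"
  using assms unfolding is_wcmr_morph_def is_map_adj_def by blast

lemma wcmr_pfo_closed:
  assumes "is_wcmr B R" and "X \<in> Obj B" and "A \<in> Obj (Ecat R)"
  shows "pfo R X A \<in> Obj (Ecat R)"
  using assms unfolding is_wcmr_def is_adjunction_def is_functor_def by blast

lemma dotarr_wcmr_morph:
  assumes F: "is_wcmr_morph B R S Fo Fa" and "dotarr R f A A'"
  shows "dotarr S f (Fo A) (Fo A')"
proof -
  from \<open>dotarr R f A A'\<close> obtain fd where fd: "fd \<in> hom (Ecat R) A A'" and "pa R fd = f"
    unfolding dotarr_def by blast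
  have "Fa fd \<in> hom (Ecat S) (Fo A) (Fo A')"
    using wcmr_morph_functor[OF F] fd unfolding is_functor_def hom_def by auto
  moreover have "pa S (Fa fd) = f"
    using wcmr_morph_pa[OF F] fd \<open>pa R fd = f\<close> unfolding hom_def by auto
  ultimately show ?thesis unfolding dotarr_def by blast
qed

lemma in_Ord_wcmr_morph:
  assumes F: "is_wcmr_morph B R S Fo Fa" and "in_Ord B R H G"
  shows "in_Ord B S H (\<lambda>X. Fo (G X))"
  using assms wcmr_morph_po[OF F] wcmr_morph_functor[OF F]
  unfolding in_Ord_def is_functor_def by auto

lemma ord_le_wcmr_morph:
  assumes F: "is_wcmr_morph B R S Fo Fa" and "ord_le B R H G G'"
  shows "ord_le B S H (\<lambda>X. Fo (G X)) (\<lambda>X. Fo (G' X))"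
  using assms(2) dotarr_wcmr_morph[OF F] unfolding ord_le_def by blast

lemma is_asign_wcmr_morph:
  assumes W: "is_wcmr B R" and F: "is_wcmr_morph B R S Fo Fa"
    and A: "is_asign B R T le mult \<Delta>"
  shows "is_asign B S T le mult (\<lambda>\<alpha> X. Fo (\<Delta> \<alpha> X))"
proof -
  have Obj: "\<Delta> \<alpha> X \<in> Obj (Ecat R)" if "X \<in> Obj B" for \<alpha> X
    using A that unfolding is_asign_def in_Ord_def by blast
  have kl: "dotarr S (kl B T X Y)
      (tens (Ecat S) (pfo S X (Fo (\<Delta> \<alpha> Y))) (Fo (\<Delta> \<beta> X))) (Fo (\<Delta> (mult \<beta> \<alpha>) Y))"
    if "X \<in> Obj B" and "Y \<in> Obj B" for \<alpha> \<beta> X Y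
  proof -
    have "dotarr R (kl B T X Y) (tens (Ecat R) (pfo R X (\<Delta> \<alpha> Y)) (\<Delta> \<beta> X)) (\<Delta> (mult \<beta> \<alpha>) Y)"
      using A that unfolding is_asign_def by blast
    moreover have "Fo (tens (Ecat R) (pfo R X (\<Delta> \<alpha> Y)) (\<Delta> \<beta> X))
        = tens (Ecat S) (pfo S X (Fo (\<Delta> \<alpha> Y))) (Fo (\<Delta> \<beta> X))"
      using that Obj wcmr_pfo_closed[OF W] wcmr_morph_tens[OF F] wcmr_morph_pfo[OF F] by simp
    ultimately show ?thesis using dotarr_wcmr_morph[OF F] by metis
  qed
  show ?thesis
    using A kl in_Ord_wcmr_morph[OF F] ord_le_wcmr_morph[OF F] unfolding is_asign_def by blast
qed

lemma asign_le_wcmr_morph: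
  assumes F: "is_wcmr_morph B R S Fo Fa" and "asign_le B R T \<Delta> \<Delta>'"
  shows "asign_le B S T (\<lambda>\<alpha> X. Fo (\<Delta> \<alpha> X)) (\<lambda>\<alpha> X. Fo (\<Delta>' \<alpha> X))"
  using assms(2) ord_le_wcmr_morph[OF F] unfolding asign_le_def by blast

theorem theorem4:
  fixes B :: "('b,'a) smcc"
    and R :: "('b,'a,'e,'f) wcmr"
    and S :: "('b,'a,'c,'d) wcmr"
    and T :: "('b,'a) smonad"
    and le :: "'g \<Rightarrow> 'g \<Rightarrow> bool" and one :: 'g and mult :: "'g \<Rightarrow> 'g \<Rightarrow> 'g"
    and Fo :: "'e \<Rightarrow> 'c" and Fa :: "'f \<Rightarrow> 'd"
  assumes "is_smcc B"
    and "is_wcmr B R"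
    and "is_wcmr B S"
    and "is_strong_monad B T"
    and "preordered_monoid le one mult"
    and "is_wcmr_morph B R S Fo Fa"
  shows "(\<forall>\<Delta>. is_asign B R T le mult \<Delta> \<longrightarrow> is_asign B S T le mult (\<lambda>\<alpha> X. Fo (\<Delta> \<alpha> X))) \<and>
         (\<forall>\<Delta> \<Delta>'. is_asign B R T le mult \<Delta> \<longrightarrow> is_asign B R T le mult \<Delta>' \<longrightarrow> asign_le B R T \<Delta> \<Delta>' \<longrightarrow>
              asign_le B S T (\<lambda>\<alpha> X. Fo (\<Delta> \<alpha> X)) (\<lambda>\<alpha> X. Fo (\<Delta>' \<alpha> X)))"
  using is_asign_wcmr_morph[OF assms(2,6)] asign_le_wcmr_morph[OF assms(6)] by blast

end
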